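(* Let $T$ be an invertible conservative nonsingular transformation of $(X,\mathcal B,\mu)$. Then the Maharam transformation $T^*$ on $(X\times\mathbb R^+,\mu\times\lambda)$ is not rank-one.
   Context: $(X,\mathcal B,\mu)$ is a standard Borel space with nonatomic $\sigma$-finite measure, $\lambda$ is Lebesgue measure on $\mathbb R^+=(0,\infty)$. For invertible nonsingular $T$, let $\omega=\frac{d\mu\circ T}{d\mu}$; the Maharam transformation is $T^*(x,y)=(Tx,\,y/\omega(x))$, which preserves $\mu\times\lambda$. An invertible measure-preserving transformation $R$ of a $\sigma$-finite space is rank-one if there is a sequence of Rokhlin columns $C_n=\{B_n,RB_n,\dots,R^{h_n-1}B_n\}$ (pairwise disjoint sets) such that for every measurable $A$ of finite measure and $\varepsilon>0$ there is $N$ such that for all $n\ge N$ some union $B_n'$ of levels of $C_n$ satisfies $\mu(A\triangle B_n')<\varepsilon$ (rank-one transformations are in particular conservative ergodic). *)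

theory Defs
  imports "HOL-Analysis.Analysis"
begin

text \<open>Standard Borel space: Borel isomorphic to a Borel subset of the reals
  (Kuratowski: every standard Borel space is of this form).\<close>
definition standard_borel :: "'a measure \<Rightarrow> bool" where
  "standard_borel M \<longleftrightarrow>
     (\<exists>(S::real set) f g. S \<in> sets borel \<and>
        f \<in> measurable M (restrict_space borel S) \<and>
        g \<in> measurable (restrict_space borel S) M \<and>
        (\<forall>x\<in>space M. f x \<in> S \<and> g (f x) = x) \<and>
        (\<forall>y\<in>S. g y \<in> space M \<and> f (g y) = y))"

definition nonatomic :: "'a measure \<Rightarrow> bool" where
  "nonatomic M \<longleftrightarrow>
     (\<forall>A\<in>sets M. 0 < emeasure M A \<longrightarrow>
        (\<exists>B\<in>sets M. B \<subseteq> A \<and> 0 < emeasure M B \<and> emeasure M B < emeasure M A))"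

definition invertible_transf :: "'a measure \<Rightarrow> ('a \<Rightarrow> 'a) \<Rightarrow> bool" where
  "invertible_transf M T \<longleftrightarrow>
     bij_betw T (space M) (space M) \<and> T \<in> measurable M M \<and>
     the_inv_into (space M) T \<in> measurable M M"

definition nonsingular_transf :: "'a measure \<Rightarrow> ('a \<Rightarrow> 'a) \<Rightarrow> bool" where
  "nonsingular_transf M T \<longleftrightarrow>
     (\<forall>A\<in>sets M. emeasure M (T -` A \<inter> space M) = 0 \<longleftrightarrow> emeasure M A = 0)"

definition conservative_transf :: "'a measure \<Rightarrow> ('a \<Rightarrow> 'a) \<Rightarrow> bool" where
  "conservative_transf M T \<longleftrightarrow>
     (\<forall>W\<in>sets M. (\<forall>n::nat. n \<ge> 1 \<longrightarrow> (T ^^ n) ` W \<inter> W = {}) \<longrightarrow> emeasure M W = 0)"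

definition rank_one :: "'a measure \<Rightarrow> ('a \<Rightarrow> 'a) \<Rightarrow> bool" where
  "rank_one N R \<longleftrightarrow>
     (\<exists>(B::nat \<Rightarrow> 'a set) (h::nat \<Rightarrow> nat).
        (\<forall>n. B n \<in> sets N) \<and>
        (\<forall>n i j. i < h n \<longrightarrow> j < h n \<longrightarrow> i \<noteq> j \<longrightarrow>
            (R ^^ i) ` B n \<inter> (R ^^ j) ` B n = {}) \<and>
        (\<forall>A\<in>sets N. emeasure N A < \<infinity> \<longrightarrow>
           (\<forall>\<epsilon>::real. \<epsilon> > 0 \<longrightarrow> (\<exists>N0. \<forall>n\<ge>N0. \<exists>J\<subseteq>{..<h n}.
               emeasure N (sym_diff A (\<Union>j\<in>J. (R ^^ j) ` B n)) < ennreal \<epsilon>))))"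

text \<open>Maharam transformation for a given version omega of d(mu o T)/d mu.\<close>
definition maharam :: "('a \<Rightarrow> 'a) \<Rightarrow> ('a \<Rightarrow> real) \<Rightarrow> 'a \<times> real \<Rightarrow> 'a \<times> real" where
  "maharam T \<omega> = (\<lambda>(x, y). (T x, y / \<omega> x))"

end

theory Submission
  imports Defs
begin

text \<open>
  The reason is a hidden
  symmetry: the fibre halving \<open>Q(x, y) = (x, y / 2)\<close> commutes with \<open>T\<^sup>*\<close> and multiplies
  \<open>\<mu> \<times> \<lambda>\<close> by \<open>1/2\<close>, whereas a rank-one transformation admits no symmetry that contracts
  the measure.  For the latter, approximate a set \<open>A\<close> of positive finite measure and its image
  \<open>Q A\<close> by unions \<open>E\<close>, \<open>F\<close> of levels of one Rokhlin column with base \<open>b\<close>.  Then \<open>Q E\<close> is a union of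
  iterates of \<open>Q b\<close>, and each level meets it in measure at most \<open>\<mu>(Q b) = \<mu>(b)/2\<close>; so
  \<open>\<mu>(Q E \<inter> F) \<le> \<mu>(F)/2 \<approx> \<mu>(Q A)/2\<close>, while \<open>\<mu>(Q E \<inter> F) \<approx> \<mu>(Q A) > 0\<close>.
\<close>

lemma emeasure_le_sym_diff:
  assumes "X \<in> sets N" "Y \<in> sets N"
  shows "emeasure N X \<le> emeasure N Y + emeasure N (sym_diff X Y)"
proof -
  have "emeasure N X \<le> emeasure N (Y \<union> sym_diff X Y)"
    using assms by (intro emeasure_mono) auto
  also have "\<dots> \<le> emeasure N Y + emeasure N (sym_diff X Y)"
    using assms by (intro emeasure_subadditive) auto
  finally show ?thesis .
qed

lemma contraction_gap_absurd:
  fixes a c \<epsilon> :: real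
  assumes a: "0 < a" and c: "0 < c" "c < 1" and \<epsilon>: "\<epsilon> = a * (1 - c) / 4"
    and le: "ennreal a \<le> ennreal c * (ennreal a + ennreal \<epsilon>) + ennreal \<epsilon> + ennreal \<epsilon>"
  shows False
proof -
  have \<epsilon>_pos: "0 < \<epsilon>" using a c by (simp add: \<epsilon>)
  have "ennreal c * (ennreal a + ennreal \<epsilon>) + ennreal \<epsilon> + ennreal \<epsilon> = ennreal (c * (a + \<epsilon>) + \<epsilon> + \<epsilon>)"
    using a \<epsilon>_pos c by (simp add: ennreal_plus[symmetric] ennreal_mult[symmetric] del: ennreal_plus)
  moreover have "0 \<le> c * (a + \<epsilon>) + \<epsilon> + \<epsilon>"
    using a \<epsilon>_pos c by simp
  ultimately have "a \<le> c * (a + \<epsilon>) + \<epsilon> + \<epsilon>"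
    using le by (simp only: ennreal_le_iff)
  moreover have "a - c * a = 4 * \<epsilon>"
    by (simp add: \<epsilon> algebra_simps)
  ultimately have "2 * \<epsilon> \<le> c * \<epsilon>"
    by (simp add: algebra_simps)
  then have "2 \<le> c"
    using \<epsilon>_pos by simp
  with c show False by simp
qed

text \<open>The Maharam transformation is of this kind; everything about rank-one transformations
  below only uses these properties.\<close>
locale measure_preserving_injection =
  fixes N :: "'b measure" and R :: "'b \<Rightarrow> 'b"
  assumes maps_space: "R ` space N \<subseteq> space N"
    and inj: "inj_on R (space N)"
    and image_sets: "Z \<in> sets N \<Longrightarrow> R ` Z \<in> sets N"
    and image_emeasure: "Z \<in> sets N \<Longrightarrow> emeasure N (R ` Z) = emeasure N Z"

lemma measure_preserving_injection_id: "measure_preserving_injection N id"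
  by unfold_locales auto

lemma measure_preserving_injection_comp:
  assumes R: "measure_preserving_injection N R" and S: "measure_preserving_injection N S"
  shows "measure_preserving_injection N (R \<circ> S)"
proof -
  interpret R: measure_preserving_injection N R by (fact R)
  interpret S: measure_preserving_injection N S by (fact S)
  show ?thesis
  proof
    show "(R \<circ> S) ` space N \<subseteq> space N"
      using R.maps_space S.maps_space by (auto simp: image_comp[symmetric])
    show "inj_on (R \<circ> S) (space N)"
      using R.inj S.inj S.maps_space by (auto intro: comp_inj_on inj_on_subset)
    fix Z assume Z: "Z \<in> sets N"
    have image: "(R \<circ> S) ` Z = R ` (S ` Z)" by (rule image_comp[symmetric])
    show "(R \<circ> S) ` Z \<in> sets N"
      unfolding image using Z by (intro R.image_sets S.image_sets)
    show "emeasure N ((R \<circ> S) ` Z) = emeasure N Z"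
      unfolding image using Z by (simp add: R.image_emeasure S.image_emeasure S.image_sets)
  qed
qed

context measure_preserving_injection
begin

lemma iterate: "measure_preserving_injection N (R ^^ n)"
proof (induction n)
  case 0 show ?case using measure_preserving_injection_id by (simp add: id_def)
next
  case (Suc n)
  have "R ^^ Suc n = R \<circ> (R ^^ n)" by simp
  then show ?case
    using measure_preserving_injection_comp[OF measure_preserving_injection_axioms Suc.IH] by metis
qed

lemma iterate_sets: "Z \<in> sets N \<Longrightarrow> (R ^^ n) ` Z \<in> sets N"
  using measure_preserving_injection.image_sets[OF iterate] .

lemma iterate_emeasure: "Z \<in> sets N \<Longrightarrow> emeasure N ((R ^^ n) ` Z) = emeasure N Z"
  using measure_preserving_injection.image_emeasure[OF iterate] .

lemma iterate_image_Int:
  "X \<subseteq> space N \<Longrightarrow> Y \<subseteq> space N \<Longrightarrow> (R ^^ n) ` (X \<inter> Y) = (R ^^ n) ` X \<inter> (R ^^ n) ` Y"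
  using measure_preserving_injection.inj[OF iterate] by (rule inj_on_image_Int)

lemma iterate_image_add: "(R ^^ m) ` ((R ^^ n) ` X) = (R ^^ (m + n)) ` X"
  by (simp add: image_comp funpow_add)

definition rokhlin_column :: "'b set \<Rightarrow> nat \<Rightarrow> bool" where
  "rokhlin_column b K \<longleftrightarrow> b \<in> sets N \<and>
     (\<forall>i j. i < K \<longrightarrow> j < K \<longrightarrow> i \<noteq> j \<longrightarrow> (R ^^ i) ` b \<inter> (R ^^ j) ` b = {})"

lemma column_union_emeasure:
  assumes col: "rokhlin_column b K" and J: "J \<subseteq> {..<K}"
  shows "emeasure N (\<Union>j\<in>J. (R ^^ j) ` b) = of_nat (card J) * emeasure N b"
proof -
  have "finite J" using J by (rule finite_subset) simp
  moreover have "disjoint_family_on (\<lambda>j. (R ^^ j) ` b) J"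
    using col J unfolding rokhlin_column_def disjoint_family_on_def by blast
  ultimately have "emeasure N (\<Union>j\<in>J. (R ^^ j) ` b) = (\<Sum>j\<in>J. emeasure N ((R ^^ j) ` b))"
    using col by (intro sum_emeasure[symmetric]) (auto simp: rokhlin_column_def iterate_sets)
  also have "\<dots> = of_nat (card J) * emeasure N b"
    using col by (simp add: rokhlin_column_def iterate_emeasure)
  finally show ?thesis .
qed

lemma column_shifted_levels_disjoint:
  assumes col: "rokhlin_column b K" and "i < K" "j < K" "i \<noteq> j"
  shows "(R ^^ (m + i)) ` b \<inter> (R ^^ (m + j)) ` b = {}"
proof -
  have b: "b \<in> sets N" using col by (simp add: rokhlin_column_def)
  have "(R ^^ (m + i)) ` b \<inter> (R ^^ (m + j)) ` b = (R ^^ m) ` ((R ^^ i) ` b \<inter> (R ^^ j) ` b)"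
    using b by (simp add: iterate_image_Int iterate_image_add sets.sets_into_space iterate_sets)
  also have "(R ^^ i) ` b \<inter> (R ^^ j) ` b = {}"
    using col assms(2-4) by (simp add: rokhlin_column_def)
  finally show ?thesis by simp
qed

text \<open>Pushing the \<open>j\<close>-th piece forward by \<open>R\<^bsup>K-j\<^esup>\<close> moves it into \<open>R\<^sup>K Q\<close> and into
  the level \<open>i + K - j\<close>; for distinct \<open>j < K\<close> these levels are disjoint.\<close>
lemma column_level_bound:
  assumes col: "rokhlin_column b K" and J: "J \<subseteq> {..<K}" and Q: "Q \<in> sets N"
  shows "emeasure N ((R ^^ i) ` b \<inter> (\<Union>j\<in>J. (R ^^ j) ` Q)) \<le> emeasure N Q"
proof -
  have b: "b \<in> sets N" using col by (simp add: rokhlin_column_def)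
  have finJ: "finite J" using J by (rule finite_subset) simp
  define shifted where "shifted j = (R ^^ (Suc i + (K - 1 - j))) ` b \<inter> (R ^^ K) ` Q" for j
  have shift: "emeasure N ((R ^^ i) ` b \<inter> (R ^^ j) ` Q) = emeasure N (shifted j)"
    if "j \<in> J" for j
  proof -
    have jK: "j < K" using J that by auto
    let ?X = "(R ^^ i) ` b \<inter> (R ^^ j) ` Q"
    have X: "?X \<in> sets N" using b Q by (intro sets.Int iterate_sets)
    have "(R ^^ i) ` b \<subseteq> space N" "(R ^^ j) ` Q \<subseteq> space N"
      using b Q by (simp_all add: iterate_sets sets.sets_into_space)
    then have "(R ^^ (K - j)) ` ?X = (R ^^ (K - j)) ` ((R ^^ i) ` b) \<inter> (R ^^ (K - j)) ` ((R ^^ j) ` Q)"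
      by (rule iterate_image_Int)
    also have "\<dots> = shifted j"
    proof -
      have "K - j + i = Suc i + (K - 1 - j)" using jK by linarith
      moreover have "K - j + j = K" using jK by linarith
      ultimately show ?thesis unfolding shifted_def iterate_image_add by simp
    qed
    finally have "(R ^^ (K - j)) ` ?X = shifted j" .
    then show ?thesis using iterate_emeasure[OF X, of "K - j"] by simp
  qed
  have "emeasure N ((R ^^ i) ` b \<inter> (\<Union>j\<in>J. (R ^^ j) ` Q))
      = emeasure N (\<Union>j\<in>J. (R ^^ i) ` b \<inter> (R ^^ j) ` Q)"
    by (simp only: Int_UN_distrib)
  also have "\<dots> \<le> (\<Sum>j\<in>J. emeasure N ((R ^^ i) ` b \<inter> (R ^^ j) ` Q))"
    using b Q by (intro emeasure_subadditive_finite finJ) (auto simp: iterate_sets)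
  also have "\<dots> = (\<Sum>j\<in>J. emeasure N (shifted j))"
    using shift by (rule sum.cong[OF refl])
  also have "\<dots> = emeasure N (\<Union>j\<in>J. shifted j)"
  proof (rule sum_emeasure)
    show "shifted ` J \<subseteq> sets N"
      unfolding shifted_def using b Q by (blast intro: sets.Int iterate_sets)
    show "disjoint_family_on shifted J"
      unfolding disjoint_family_on_def
    proof (intro ballI impI)
      fix j j' assume "j \<in> J" "j' \<in> J" "j \<noteq> j'"
      moreover have "j < K" "j' < K" using J \<open>j \<in> J\<close> \<open>j' \<in> J\<close> by auto
      ultimately have "K - 1 - j < K" "K - 1 - j' < K" "K - 1 - j \<noteq> K - 1 - j'"
        by linarith+
      then have "(R ^^ (Suc i + (K - 1 - j))) ` b \<inter> (R ^^ (Suc i + (K - 1 - j'))) ` b = {}"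
        by (rule column_shifted_levels_disjoint[OF col])
      then show "shifted j \<inter> shifted j' = {}"
        unfolding shifted_def by blast
    qed
  qed (fact finJ)
  also have "\<dots> \<le> emeasure N ((R ^^ K) ` Q)"
    unfolding shifted_def using Q by (intro emeasure_mono iterate_sets) auto
  also have "\<dots> = emeasure N Q"
    using Q by (rule iterate_emeasure)
  finally show ?thesis .
qed

lemma column_union_sets:
  assumes "rokhlin_column b K" and "J \<subseteq> {..<K}"
  shows "(\<Union>j\<in>J. (R ^^ j) ` b) \<in> sets N"
  using assms unfolding rokhlin_column_def
  by (auto intro!: sets.finite_UN intro: finite_subset iterate_sets)

lemma rank_one_common_column:
  assumes "rank_one N R"
    and X: "X \<in> sets N" "emeasure N X < \<infinity>" and Y: "Y \<in> sets N" "emeasure N Y < \<infinity>"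
    and \<epsilon>: "\<epsilon> > 0"
  obtains b K J J' where "rokhlin_column b K" "J \<subseteq> {..<K}" "J' \<subseteq> {..<K}"
    "emeasure N (sym_diff X (\<Union>j\<in>J. (R ^^ j) ` b)) < ennreal \<epsilon>"
    "emeasure N (sym_diff Y (\<Union>j\<in>J'. (R ^^ j) ` b)) < ennreal \<epsilon>"
proof -
  obtain B :: "nat \<Rightarrow> 'b set" and h where
    levels: "\<forall>n. B n \<in> sets N"
      "\<forall>n i j. i < h n \<longrightarrow> j < h n \<longrightarrow> i \<noteq> j \<longrightarrow> (R ^^ i) ` B n \<inter> (R ^^ j) ` B n = {}"
    and approx: "\<forall>Z\<in>sets N. emeasure N Z < \<infinity> \<longrightarrow> (\<forall>\<epsilon>::real. \<epsilon> > 0 \<longrightarrow>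
       (\<exists>n0. \<forall>n\<ge>n0. \<exists>J\<subseteq>{..<h n}. emeasure N (sym_diff Z (\<Union>j\<in>J. (R ^^ j) ` B n)) < ennreal \<epsilon>))"
    using \<open>rank_one N R\<close> unfolding rank_one_def by (elim exE conjE)
  obtain n1 where n1: "\<And>n. n \<ge> n1 \<Longrightarrow>
      \<exists>J\<subseteq>{..<h n}. emeasure N (sym_diff X (\<Union>j\<in>J. (R ^^ j) ` B n)) < ennreal \<epsilon>"
    using approx X \<epsilon> by blast
  obtain n2 where n2: "\<And>n. n \<ge> n2 \<Longrightarrow>
      \<exists>J\<subseteq>{..<h n}. emeasure N (sym_diff Y (\<Union>j\<in>J. (R ^^ j) ` B n)) < ennreal \<epsilon>"
    using approx Y \<epsilon> by blast
  have "rokhlin_column (B (max n1 n2)) (h (max n1 n2))"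
    using levels by (simp add: rokhlin_column_def)
  with n1[of "max n1 n2"] n2[of "max n1 n2"] show ?thesis
    using that by auto
qed

end

locale scaling_symmetry = measure_preserving_injection N R
  for N :: "'b measure" and R :: "'b \<Rightarrow> 'b" +
  fixes P :: "'b \<Rightarrow> 'b" and c :: real
  assumes P_sets: "Z \<in> sets N \<Longrightarrow> P ` Z \<in> sets N"
    and P_emeasure: "Z \<in> sets N \<Longrightarrow> emeasure N (P ` Z) = ennreal c * emeasure N Z"
    and commute: "p \<in> space N \<Longrightarrow> R (P p) = P (R p)"
begin

lemma iterate_commute: "p \<in> space N \<Longrightarrow> (R ^^ n) (P p) = P ((R ^^ n) p)"
proof (induction n)
  case (Suc n)
  have "(R ^^ n) p \<in> space N"
    using Suc.prems measure_preserving_injection.maps_space[OF iterate] by blast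
  then show ?case using Suc by (simp add: commute)
qed simp

lemma image_column_union:
  assumes "b \<subseteq> space N"
  shows "P ` (\<Union>j\<in>J. (R ^^ j) ` b) = (\<Union>j\<in>J. (R ^^ j) ` (P ` b))"
  using assms by (force simp: image_UN image_image iterate_commute)

lemma overlap_upper_bound:
  assumes col: "rokhlin_column b K" and J: "J \<subseteq> {..<K}" and J': "J' \<subseteq> {..<K}"
  shows "emeasure N (P ` (\<Union>j\<in>J. (R ^^ j) ` b) \<inter> (\<Union>i\<in>J'. (R ^^ i) ` b))
           \<le> ennreal c * emeasure N (\<Union>i\<in>J'. (R ^^ i) ` b)"
proof -
  have b: "b \<in> sets N" using col by (simp add: rokhlin_column_def)
  have finJ': "finite J'" using J' by (rule finite_subset) simp
  let ?PE = "\<Union>j\<in>J. (R ^^ j) ` (P ` b)"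
  have PE: "?PE \<in> sets N"
    using b J by (intro sets.finite_UN) (auto intro: finite_subset iterate_sets P_sets)
  have "P ` (\<Union>j\<in>J. (R ^^ j) ` b) \<inter> (\<Union>i\<in>J'. (R ^^ i) ` b) = ?PE \<inter> (\<Union>i\<in>J'. (R ^^ i) ` b)"
    by (simp only: image_column_union[OF sets.sets_into_space[OF b]])
  also have "\<dots> = (\<Union>i\<in>J'. (R ^^ i) ` b \<inter> ?PE)"
    by auto
  finally have "emeasure N (P ` (\<Union>j\<in>J. (R ^^ j) ` b) \<inter> (\<Union>i\<in>J'. (R ^^ i) ` b))
      = emeasure N (\<Union>i\<in>J'. (R ^^ i) ` b \<inter> ?PE)"
    by (rule arg_cong)
  also have "\<dots> \<le> (\<Sum>i\<in>J'. emeasure N ((R ^^ i) ` b \<inter> ?PE))"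
    using b PE by (intro emeasure_subadditive_finite finJ') (auto simp: iterate_sets)
  also have "\<dots> \<le> (\<Sum>i\<in>J'. emeasure N (P ` b))"
    using col J b by (intro sum_mono column_level_bound P_sets)
  also have "\<dots> = ennreal c * (of_nat (card J') * emeasure N b)"
    using b by (simp add: P_emeasure mult_ac)
  also have "\<dots> = ennreal c * emeasure N (\<Union>i\<in>J'. (R ^^ i) ` b)"
    using col J' by (simp add: column_union_emeasure)
  finally show ?thesis .
qed

lemma overlap_lower_bound:
  assumes "c \<le> 1" and A: "A \<in> sets N" and E: "E \<in> sets N" and F: "F \<in> sets N"
  shows "emeasure N (P ` A)
           \<le> emeasure N (P ` E \<inter> F) + emeasure N (sym_diff A E) + emeasure N (sym_diff (P ` A) F)"
proof -
  have sets: "P ` E \<inter> F \<in> sets N" "P ` (A - E) \<in> sets N" "P ` A - F \<in> sets N"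
    using A E F by (auto intro: P_sets)
  have "P ` A \<subseteq> (P ` E \<inter> F) \<union> P ` (A - E) \<union> (P ` A - F)"
    by auto
  then have "emeasure N (P ` A) \<le> emeasure N ((P ` E \<inter> F) \<union> P ` (A - E) \<union> (P ` A - F))"
    using sets by (intro emeasure_mono) auto
  also have "\<dots> \<le> emeasure N ((P ` E \<inter> F) \<union> P ` (A - E)) + emeasure N (P ` A - F)"
    using sets by (intro emeasure_subadditive) auto
  also have "\<dots> \<le> emeasure N (P ` E \<inter> F) + emeasure N (P ` (A - E)) + emeasure N (P ` A - F)"
    using sets by (intro add_right_mono emeasure_subadditive) auto
  also have "emeasure N (P ` (A - E)) \<le> emeasure N (sym_diff A E)"
  proof -
    have "emeasure N (P ` (A - E)) = ennreal c * emeasure N (A - E)"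
      using A E by (simp add: P_emeasure)
    also have "\<dots> \<le> 1 * emeasure N (A - E)"
      using \<open>c \<le> 1\<close> by (intro mult_right_mono) simp_all
    also have "\<dots> \<le> emeasure N (sym_diff A E)"
      using A E by (simp add: emeasure_mono)
    finally show ?thesis .
  qed
  also have "emeasure N (P ` A - F) \<le> emeasure N (sym_diff (P ` A) F)"
    using sets A F by (intro emeasure_mono) (auto intro: P_sets)
  finally show ?thesis by (simp add: add_mono)
qed

text \<open>A rank-one transformation has no scaling symmetry with factor \<open>0 < c < 1\<close>: approximating \<open>A\<close> and
  \<open>P A\<close> by levels of one column, the two bounds above give \<open>\<mu>(P A) \<le> c \<mu>(P A) + O(\<epsilon>)\<close>.\<close>
theorem not_rank_one:
  assumes c: "0 < c" "c < 1"
    and A: "A \<in> sets N" "0 < emeasure N A" "emeasure N A < \<infinity>"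
  shows "\<not> rank_one N R"
proof
  assume "rank_one N R"
  define A' where "A' = P ` A"
  have A': "A' \<in> sets N" "emeasure N A' = ennreal c * emeasure N A"
    using A by (simp_all add: A'_def P_sets P_emeasure)
  have A'_fin: "emeasure N A' < \<infinity>" and "0 < emeasure N A'"
    using A'(2) A(2,3) c by (simp_all add: ennreal_mult_less_top ennreal_zero_less_mult_iff)
  then have "emeasure N A' = ennreal (enn2real (emeasure N A'))" "0 < enn2real (emeasure N A')"
    by (simp_all add: enn2real_positive_iff)
  then obtain a where a: "emeasure N A' = ennreal a" "0 < a"
    by blast
  define \<epsilon> where "\<epsilon> = a * (1 - c) / 4"
  have \<epsilon>: "0 < \<epsilon>" using a c by (simp add: \<epsilon>_def)
  obtain b K J J' where col: "rokhlin_column b K" and J: "J \<subseteq> {..<K}" "J' \<subseteq> {..<K}"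
    and close: "emeasure N (sym_diff A (\<Union>j\<in>J. (R ^^ j) ` b)) < ennreal \<epsilon>"
      "emeasure N (sym_diff A' (\<Union>j\<in>J'. (R ^^ j) ` b)) < ennreal \<epsilon>"
    using rank_one_common_column[OF \<open>rank_one N R\<close> A(1,3) A'(1) A'_fin \<epsilon>] .
  define E where "E = (\<Union>j\<in>J. (R ^^ j) ` b)"
  define E' where "E' = (\<Union>j\<in>J'. (R ^^ j) ` b)"
  have E: "E \<in> sets N" "E' \<in> sets N"
    unfolding E_def E'_def using col J by (simp_all add: column_union_sets)
  have "ennreal a \<le> emeasure N (P ` E \<inter> E') + emeasure N (sym_diff A E) + emeasure N (sym_diff A' E')"
    using overlap_lower_bound[OF _ A(1) E] c a(1) by (simp add: A'_def)
  also have "\<dots> \<le> emeasure N (P ` E \<inter> E') + \<epsilon> + \<epsilon>"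
    using close unfolding E_def E'_def by (intro add_mono order.refl less_imp_le)
  also have "emeasure N (P ` E \<inter> E') \<le> ennreal c * emeasure N E'"
    unfolding E_def E'_def using col J by (rule overlap_upper_bound)
  also have "emeasure N E' \<le> ennreal a + \<epsilon>"
  proof -
    have "sym_diff E' A' = sym_diff A' E'" by blast
    then have "emeasure N E' \<le> emeasure N A' + emeasure N (sym_diff A' E')"
      using emeasure_le_sym_diff[OF E(2) A'(1)] by simp
    also have "\<dots> \<le> ennreal a + \<epsilon>"
      using a(1) close(2) unfolding E'_def by (intro add_mono order.refl less_imp_le) simp_all
    finally show ?thesis .
  qed
  finally have "ennreal a \<le> ennreal c * (ennreal a + ennreal \<epsilon>) + ennreal \<epsilon> + ennreal \<epsilon>"
    by (simp add: add_mono mult_left_mono)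
  then show False
    using contraction_gap_absurd[OF a(2) c \<epsilon>_def] by blast
qed

end

abbreviation positive_reals :: "real measure" where
  "positive_reals \<equiv> restrict_space lborel {0<..}"

lemma sigma_finite_positive_reals: "sigma_finite_measure positive_reals"
  by (rule sigma_finite_measure_restrict_space) (auto simp: lborel.sigma_finite_measure_axioms)

lemma emeasure_positive_reals_scaled:
  fixes c :: real
  assumes S: "S \<in> sets positive_reals" and c: "c > 0"
  shows "emeasure positive_reals {y. y * c \<in> S} = emeasure positive_reals S * ennreal (1 / c)"
proof -
  have S': "S \<in> sets borel" "S \<subseteq> {0<..}"
    using S by (auto simp: sets_restrict_space_iff)
  have preimage: "{y. y * c \<in> S} = (*) c -` S"
    by (auto simp: mult.commute)
  have "emeasure lborel ((*) c -` S) = emeasure (distr lborel borel ((*) c)) S"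
    using S' by (simp add: emeasure_distr)
  also have "\<dots> = emeasure (density lborel (\<lambda>_. ennreal (inverse c))) S"
    using lborel_distr_mult[of c] c by simp
  also have "\<dots> = ennreal (inverse c) * emeasure lborel S"
    using S' by (simp add: emeasure_density nn_integral_cmult_indicator)
  finally have "emeasure lborel {y. y * c \<in> S} = emeasure lborel S * ennreal (1 / c)"
    by (simp add: preimage mult.commute divide_inverse)
  moreover have "{y. y * c \<in> S} \<subseteq> {0<..}"
    using S' c by (auto simp: zero_less_mult_iff)
  ultimately show ?thesis
    using S' by (simp add: emeasure_restrict_space)
qed

text \<open>The Maharam transformation is the case \<open>\<psi> = \<omega>\<close>; the
  halving of the fibre coordinate is the case \<open>\<phi> = id\<close>, \<open>\<psi> = 2\<close>.\<close>
definition skew_scale :: "('a \<Rightarrow> 'a) \<Rightarrow> ('a \<Rightarrow> real) \<Rightarrow> 'a \<times> real \<Rightarrow> 'a \<times> real" where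
  "skew_scale \<phi> \<psi> = (\<lambda>(x, y). (\<phi> x, y / \<psi> x))"

lemma skew_scale_simp [simp]: "skew_scale \<phi> \<psi> (x, y) = (\<phi> x, y / \<psi> x)"
  by (simp add: skew_scale_def)

lemma maharam_eq_skew_scale: "maharam T \<omega> = skew_scale T \<omega>"
  by (simp add: maharam_def skew_scale_def)

locale invertible_with_derivative =
  fixes M :: "'a measure" and \<phi> :: "'a \<Rightarrow> 'a" and \<omega> :: "'a \<Rightarrow> real"
  assumes sigma_finite: "sigma_finite_measure M"
    and invertible: "invertible_transf M \<phi>"
    and derivative_measurable: "\<omega> \<in> borel_measurable M"
    and derivative_pos: "\<forall>x\<in>space M. \<omega> x > 0"
    and derivative: "\<forall>A\<in>sets M. emeasure M (\<phi> ` A) = (\<integral>\<^sup>+ x \<in> A. ennreal (\<omega> x) \<partial>M)"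
begin

abbreviation N :: "('a \<times> real) measure" where
  "N \<equiv> M \<Otimes>\<^sub>M positive_reals"

definition phi_inv :: "'a \<Rightarrow> 'a" where
  "phi_inv = the_inv_into (space M) \<phi>"

lemma space_N: "space N = space M \<times> {0<..}"
  by (simp add: space_pair_measure)

lemma phi_inv_measurable: "phi_inv \<in> measurable M M"
  using invertible by (simp add: invertible_transf_def phi_inv_def)

lemma phi_inv_in_space: "x \<in> space M \<Longrightarrow> phi_inv x \<in> space M"
  using measurable_space[OF phi_inv_measurable] .

lemma phi_in_space: "x \<in> space M \<Longrightarrow> \<phi> x \<in> space M"
  using invertible by (auto simp: invertible_transf_def bij_betw_def)

lemma phi_phi_inv: "x \<in> space M \<Longrightarrow> \<phi> (phi_inv x) = x"
  using invertible unfolding invertible_transf_def phi_inv_def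
  by (metis bij_betw_def f_the_inv_into_f)

lemma phi_inv_phi: "x \<in> space M \<Longrightarrow> phi_inv (\<phi> x) = x"
  using invertible unfolding invertible_transf_def phi_inv_def
  by (metis bij_betw_def the_inv_into_f_f)

lemma distr_phi_inv: "distr M M phi_inv = density M (\<lambda>x. ennreal (\<omega> x))"
proof (rule measure_eqI)
  fix A assume "A \<in> sets (distr M M phi_inv)"
  then have A: "A \<in> sets M" by simp
  have "phi_inv -` A \<inter> space M = \<phi> ` A"
    using sets.sets_into_space[OF A] phi_in_space phi_inv_phi phi_phi_inv
    by (auto intro!: image_eqI[of _ \<phi> "phi_inv _"])
  then show "emeasure (distr M M phi_inv) A = emeasure (density M (\<lambda>x. ennreal (\<omega> x))) A"
    using A derivative derivative_measurable
    by (simp add: emeasure_distr[OF phi_inv_measurable] emeasure_density)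
qed simp

context
  fixes \<psi> :: "'a \<Rightarrow> real"
  assumes scale_measurable: "\<psi> \<in> borel_measurable M"
    and scale_pos: "\<forall>x\<in>space M. \<psi> x > 0"
begin

definition skew_inverse :: "'a \<times> real \<Rightarrow> 'a \<times> real" where
  "skew_inverse = (\<lambda>(x, y). (phi_inv x, y * \<psi> (phi_inv x)))"

lemma skew_inverse_measurable: "skew_inverse \<in> measurable N N"
proof -
  have "(\<lambda>p. snd p * \<psi> (phi_inv (fst p))) \<in> measurable N positive_reals"
  proof (rule measurable_restrict_space2)
    show "(\<lambda>p. snd p * \<psi> (phi_inv (fst p))) \<in> space N \<rightarrow> {0<..}"
      using scale_pos phi_inv_in_space by (auto simp: space_N)
    have "snd \<in> measurable N borel"
      by (rule measurable_compose[OF measurable_snd]) (simp add: measurable_restrict_space1)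
    moreover have "(\<lambda>p. \<psi> (phi_inv (fst p))) \<in> measurable N borel"
      using phi_inv_measurable scale_measurable by measurable
    ultimately show "(\<lambda>p. snd p * \<psi> (phi_inv (fst p))) \<in> measurable N lborel"
      using borel_measurable_times by simp
  qed
  moreover have "(\<lambda>p. phi_inv (fst p)) \<in> measurable N M"
    using phi_inv_measurable by measurable
  ultimately show ?thesis
    unfolding skew_inverse_def by (simp add: split_beta' measurable_Pair)
qed

lemma skew_scale_image:
  assumes "Z \<subseteq> space N"
  shows "skew_scale \<phi> \<psi> ` Z = skew_inverse -` Z \<inter> space N"
proof
  show "skew_scale \<phi> \<psi> ` Z \<subseteq> skew_inverse -` Z \<inter> space N"
  proof
    fix q assume "q \<in> skew_scale \<phi> \<psi> ` Z"
    then obtain x y where xy: "(x, y) \<in> Z" "q = (\<phi> x, y / \<psi> x)" by auto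
    with assms have x: "x \<in> space M" and "y > 0" by (auto simp: space_N)
    moreover have "\<psi> x > 0" using x scale_pos by simp
    ultimately show "q \<in> skew_inverse -` Z \<inter> space N"
      using xy by (simp add: skew_inverse_def phi_inv_phi phi_in_space space_N)
  qed
  show "skew_inverse -` Z \<inter> space N \<subseteq> skew_scale \<phi> \<psi> ` Z"
  proof
    fix q assume q: "q \<in> skew_inverse -` Z \<inter> space N"
    obtain x y where q_eq: "q = (x, y)" by (cases q)
    with q have x: "x \<in> space M" by (auto simp: space_N)
    then have "\<psi> (phi_inv x) > 0" using scale_pos phi_inv_in_space by simp
    with x have "skew_scale \<phi> \<psi> (skew_inverse q) = q"
      by (simp add: q_eq skew_inverse_def phi_phi_inv)
    with q show "q \<in> skew_scale \<phi> \<psi> ` Z"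
      by (metis IntD1 image_eqI vimageD)
  qed
qed

lemma skew_scale_sets: "Z \<in> sets N \<Longrightarrow> skew_scale \<phi> \<psi> ` Z \<in> sets N"
  using measurable_sets[OF skew_inverse_measurable] skew_scale_image[OF sets.sets_into_space]
  by simp

lemma skew_scale_maps_space: "skew_scale \<phi> \<psi> ` space N \<subseteq> space N"
  using skew_scale_image[of "space N"] by simp

lemma skew_scale_inj: "inj_on (skew_scale \<phi> \<psi>) (space N)"
proof (rule inj_onI)
  fix p q assume "p \<in> space N" "q \<in> space N" and eq: "skew_scale \<phi> \<psi> p = skew_scale \<phi> \<psi> q"
  moreover obtain x y x' y' where pq: "p = (x, y)" "q = (x', y')" by (cases p, cases q)
  ultimately have x: "x \<in> space M" "x' \<in> space M" by (auto simp: space_N)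
  from eq have "\<phi> x = \<phi> x'" by (simp add: pq)
  then have "x = x'" using x by (metis phi_inv_phi)
  moreover have "\<psi> x > 0" using x scale_pos by simp
  ultimately show "p = q" using eq by (simp add: pq)
qed

text \<open>Fubini: each fibre is rescaled by \<open>1/\<psi>\<close>, and the base is moved by \<open>\<phi>\<close> with
  Radon-Nikodym derivative \<open>\<omega>\<close>.\<close>
lemma skew_scale_emeasure:
  assumes Z: "Z \<in> sets N"
  shows "emeasure N (skew_scale \<phi> \<psi> ` Z)
           = (\<integral>\<^sup>+x. ennreal (\<omega> x / \<psi> x) * emeasure positive_reals (Pair x -` Z) \<partial>M)"
proof -
  interpret L: sigma_finite_measure positive_reals by (rule sigma_finite_positive_reals)
  define F where "F x = emeasure positive_reals (Pair x -` Z)" for x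
  define G where "G x = F x * ennreal (1 / \<psi> x)" for x
  have F: "F \<in> borel_measurable M"
    unfolding F_def using L.measurable_emeasure_Pair[OF Z] .
  have G: "G \<in> borel_measurable M"
    unfolding G_def using F scale_measurable by measurable
  have fibre: "emeasure positive_reals (Pair x -` (skew_scale \<phi> \<psi> ` Z)) = G (phi_inv x)"
    if x: "x \<in> space M" for x
  proof -
    have pos: "\<psi> (phi_inv x) > 0" using x scale_pos phi_inv_in_space by auto
    have "Pair x -` (skew_scale \<phi> \<psi> ` Z) = {y. y * \<psi> (phi_inv x) \<in> Pair (phi_inv x) -` Z}"
      using skew_scale_image[OF sets.sets_into_space[OF Z]] sets.sets_into_space[OF Z] x pos
      by (auto simp: skew_inverse_def space_N zero_less_mult_iff)
    then show ?thesis
      using emeasure_positive_reals_scaled[OF sets_Pair1[OF Z] pos] by (simp add: G_def F_def)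
  qed
  have "emeasure N (skew_scale \<phi> \<psi> ` Z)
      = (\<integral>\<^sup>+x. emeasure positive_reals (Pair x -` (skew_scale \<phi> \<psi> ` Z)) \<partial>M)"
    using L.emeasure_pair_measure_alt[OF skew_scale_sets[OF Z]] .
  also have "\<dots> = (\<integral>\<^sup>+x. G (phi_inv x) \<partial>M)"
    by (rule nn_integral_cong) (rule fibre)
  also have "\<dots> = (\<integral>\<^sup>+x. G x \<partial>distr M M phi_inv)"
    using G by (simp add: nn_integral_distr[OF phi_inv_measurable])
  also have "\<dots> = (\<integral>\<^sup>+x. ennreal (\<omega> x) * G x \<partial>M)"
    unfolding distr_phi_inv using G derivative_measurable by (simp add: nn_integral_density)
  also have "\<dots> = (\<integral>\<^sup>+x. ennreal (\<omega> x / \<psi> x) * F x \<partial>M)"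
  proof (rule nn_integral_cong)
    fix x assume "x \<in> space M"
    then have "\<omega> x > 0" "\<psi> x > 0" using derivative_pos scale_pos by auto
    then show "ennreal (\<omega> x) * G x = ennreal (\<omega> x / \<psi> x) * F x"
      by (simp add: G_def ennreal_mult[symmetric] divide_inverse mult_ac)
  qed
  finally show ?thesis by (simp only: F_def)
qed

end

end

lemma invertible_with_derivative_id:
  assumes "sigma_finite_measure M"
  shows "invertible_with_derivative M id (\<lambda>_. 1)"
proof (rule invertible_with_derivative.intro)
  show "invertible_transf M id"
  proof -
    have "the_inv_into (space M) id \<in> measurable M M"
      by (rule measurable_cong[THEN iffD2, of _ _ id]) (auto simp: the_inv_into_f_eq)
    then show ?thesis by (simp add: invertible_transf_def)
  qed
  show "\<forall>A\<in>sets M. emeasure M (id ` A) = (\<integral>\<^sup>+ x \<in> A. ennreal 1 \<partial>M)"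
    by simp
qed (simp_all add: assms)

lemma fibre_scaling:
  assumes M: "sigma_finite_measure M" and s: "s > 0"
    and Z: "Z \<in> sets (M \<Otimes>\<^sub>M positive_reals)"
  shows "skew_scale id (\<lambda>_. s) ` Z \<in> sets (M \<Otimes>\<^sub>M positive_reals)"
    and "emeasure (M \<Otimes>\<^sub>M positive_reals) (skew_scale id (\<lambda>_. s) ` Z)
           = ennreal (1 / s) * emeasure (M \<Otimes>\<^sub>M positive_reals) Z"
proof -
  interpret invertible_with_derivative M id "\<lambda>_. 1"
    by (rule invertible_with_derivative_id[OF M])
  interpret L: sigma_finite_measure positive_reals by (rule sigma_finite_positive_reals)
  have scale: "(\<lambda>_. s) \<in> borel_measurable M" "\<forall>x\<in>space M. (\<lambda>_. s) x > 0"
    using s by simp_all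
  show "skew_scale id (\<lambda>_. s) ` Z \<in> sets N" by (rule skew_scale_sets[OF scale Z])
  have "emeasure N (skew_scale id (\<lambda>_. s) ` Z)
      = (\<integral>\<^sup>+x. ennreal (1 / s) * emeasure positive_reals (Pair x -` Z) \<partial>M)"
    by (rule skew_scale_emeasure[OF scale Z])
  also have "\<dots> = ennreal (1 / s) * emeasure N Z"
    using L.measurable_emeasure_Pair[OF Z] L.emeasure_pair_measure_alt[OF Z]
    by (simp add: nn_integral_cmult)
  finally show "emeasure N (skew_scale id (\<lambda>_. s) ` Z) = ennreal (1 / s) * emeasure N Z" .
qed

context invertible_with_derivative
begin

text \<open>With \<open>\<psi> = \<omega>\<close> the fibre rescaling exactly compensates the distortion of the base:
  the Maharam transformation preserves \<open>\<mu> \<times> \<lambda>\<close>.\<close>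
lemma maharam_measure_preserving: "measure_preserving_injection N (maharam \<phi> \<omega>)"
  unfolding maharam_eq_skew_scale
proof
  interpret L: sigma_finite_measure positive_reals by (rule sigma_finite_positive_reals)
  note rn = derivative_measurable derivative_pos
  show "skew_scale \<phi> \<omega> ` space N \<subseteq> space N" by (rule skew_scale_maps_space[OF rn])
  show "inj_on (skew_scale \<phi> \<omega>) (space N)" by (rule skew_scale_inj[OF rn])
  fix Z assume Z: "Z \<in> sets N"
  show "skew_scale \<phi> \<omega> ` Z \<in> sets N" by (rule skew_scale_sets[OF rn Z])
  have "emeasure N (skew_scale \<phi> \<omega> ` Z)
      = (\<integral>\<^sup>+x. ennreal (\<omega> x / \<omega> x) * emeasure positive_reals (Pair x -` Z) \<partial>M)"
    by (rule skew_scale_emeasure[OF rn Z])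
  also have "\<dots> = (\<integral>\<^sup>+x. emeasure positive_reals (Pair x -` Z) \<partial>M)"
  proof (rule nn_integral_cong)
    fix x assume "x \<in> space M"
    then have "\<omega> x > 0" using derivative_pos by simp
    then show "ennreal (\<omega> x / \<omega> x) * emeasure positive_reals (Pair x -` Z)
        = emeasure positive_reals (Pair x -` Z)" by simp
  qed
  also have "\<dots> = emeasure N Z"
    using L.emeasure_pair_measure_alt[OF Z] by simp
  finally show "emeasure N (skew_scale \<phi> \<omega> ` Z) = emeasure N Z" .
qed

lemma maharam_halving_symmetry:
  "scaling_symmetry N (maharam \<phi> \<omega>) (skew_scale id (\<lambda>_. 2)) (1 / 2)"
proof -
  interpret measure_preserving_injection N "maharam \<phi> \<omega>"
    by (rule maharam_measure_preserving)
  show ?thesis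
  proof
    fix Z assume "Z \<in> sets N"
    then show "skew_scale id (\<lambda>_. 2) ` Z \<in> sets N"
      "emeasure N (skew_scale id (\<lambda>_. 2) ` Z) = ennreal (1 / 2) * emeasure N Z"
      using fibre_scaling[OF sigma_finite, of 2] by simp_all
  next
    fix p :: "'a \<times> real"
    show "maharam \<phi> \<omega> (skew_scale id (\<lambda>_. 2) p) = skew_scale id (\<lambda>_. 2) (maharam \<phi> \<omega> p)"
      by (cases p) (simp add: maharam_def)
  qed
qed

end

text \<open>The extension carries a set of positive finite measure: a rectangle over a set of positive
  finite measure in the base.\<close>
lemma positive_finite_rectangle:
  assumes M: "sigma_finite_measure M" and pos: "emeasure M (space M) > 0"
  obtains A where "A \<in> sets (M \<Otimes>\<^sub>M positive_reals)"
    "0 < emeasure (M \<Otimes>\<^sub>M positive_reals) A" "emeasure (M \<Otimes>\<^sub>M positive_reals) A < \<infinity>"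
proof -
  interpret sigma_finite_measure M by (fact M)
  interpret L: sigma_finite_measure positive_reals by (rule sigma_finite_positive_reals)
  obtain X :: "nat \<Rightarrow> 'a set" where X: "range X \<subseteq> sets M" "(\<Union>i. X i) = space M"
    "\<And>i. emeasure M (X i) \<noteq> \<infinity>"
    using sigma_finite by blast
  have "\<exists>i. emeasure M (X i) \<noteq> 0"
  proof (rule ccontr)
    assume "\<nexists>i. emeasure M (X i) \<noteq> 0"
    then have "emeasure M (\<Union>i. X i) = 0"
      using X(1) by (intro emeasure_UN_eq_0) auto
    with X(2) pos show False by simp
  qed
  then obtain i where i: "emeasure M (X i) \<noteq> 0" by blast
  have I: "{0<..1::real} \<in> sets positive_reals"
    by (auto simp: sets_restrict_space_iff)
  have "emeasure positive_reals {0<..1::real} = emeasure lborel {0<..1::real}"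
    by (rule emeasure_restrict_space) auto
  then have I_measure: "emeasure positive_reals {0<..1::real} = 1"
    by simp
  show ?thesis
  proof (rule that[of "X i \<times> {0<..1}"])
    show "X i \<times> {0<..1} \<in> sets (M \<Otimes>\<^sub>M positive_reals)"
      using X(1) I by auto
    have "emeasure (M \<Otimes>\<^sub>M positive_reals) (X i \<times> {0<..1}) = emeasure M (X i)"
      using L.emeasure_pair_measure_Times[OF _ I, of "X i"] X(1) I_measure by auto
    then show "0 < emeasure (M \<Otimes>\<^sub>M positive_reals) (X i \<times> {0<..1})"
      "emeasure (M \<Otimes>\<^sub>M positive_reals) (X i \<times> {0<..1}) < \<infinity>"
      using i X(3)[of i] by (simp_all add: zero_less_iff_neq_zero less_top)
  qed
qed

theorem mainTheorem8:
  fixes M :: "'a measure" and T :: "'a \<Rightarrow> 'a" and \<omega> :: "'a \<Rightarrow> real"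
  assumes "standard_borel M"
    and "sigma_finite_measure M"
    and "nonatomic M"
    and "emeasure M (space M) > 0"
    and "invertible_transf M T"
    and "conservative_transf M T"
    and "nonsingular_transf M T"
    and "\<omega> \<in> borel_measurable M"
    and "\<forall>x\<in>space M. \<omega> x > 0"
    and "\<forall>A\<in>sets M. emeasure M (T ` A) = (\<integral>\<^sup>+ x \<in> A. ennreal (\<omega> x) \<partial>M)"
  shows "\<not> rank_one (M \<Otimes>\<^sub>M restrict_space lborel {0<..}) (maharam T \<omega>)"
proof -
  interpret invertible_with_derivative M T \<omega>
    by (rule invertible_with_derivative.intro) (fact assms)+
  interpret scaling_symmetry N "maharam T \<omega>" "skew_scale id (\<lambda>_. 2)" "1 / 2"
    by (rule maharam_halving_symmetry)
  obtain A where "A \<in> sets N" "0 < emeasure N A" "emeasure N A < \<infinity>"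
    using positive_finite_rectangle[OF assms(2,4)] .
  then show ?thesis
    by (intro not_rank_one) simp_all
qed

end
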